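(* Let $A \in \mathbb{R}^{n\times d}$, $b \in \mathbb{R}^n$, and suppose $Ax=b$ admits a solution $x^*$ (not necessarily unique). Let $w$ be a random variable in $\mathbb{R}^n$, $\mathcal{N}(w) = \mathrm{span}\lbrace z \in \mathbb{R}^d : \mathbb{P}[z'A'w = 0]=1\rbrace$, $\mathcal{R}(w) = \mathcal{N}(w)^\perp$, and let $\mathcal{V}(w)$ be the subspace with $\mathcal{V}(w) \perp \mathcal{R}(w)$ and $\mathcal{V}(w) \oplus \mathcal{R}(w) = \mathrm{row}(A)$. Let $w_0,w_1,\ldots$ be random variables in $\mathbb{R}^n$ with $\mathbb{P}[A'w_l \in \mathcal{R}(w)]=1$ for all $l$, let $T = \min\lbrace k\geq 0 : \mathrm{span}\lbrace A'w_0,\ldots,A'w_k\rbrace \supset \mathcal{R}(w)\rbrace$, let $x_0\in\mathbb{R}^d$ be arbitrary, $S_0 = I_d$, and for $l\geq 0$ $$x_{l+1} = \begin{cases} x_l + \dfrac{S_l A' w_l w_l'(b - A x_l)}{w_l' A S_l A' w_l} & S_l A'w_l \neq 0,\\ x_l & \text{otherwise,}\end{cases}\qquad S_{l+1} = \begin{cases} S_l - \dfrac{S_l A' w_l w_l' A S_l}{w_l' A S_l A' w_l} & S_l A' w_l \neq 0,\\ S_l & \text{otherwise.}\end{cases}$$ Then, almost surely on the event $\lbrace T < \infty\rbrace$, $Ax_{T+1} = b$ if and only if $P_{\mathcal{V}(w)} x_0 = P_{\mathcal{V}(w)} x^*$.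
   Context: $P_W$ denotes orthogonal projection onto subspace $W$; $\mathrm{row}(A)$ is the row space of $A$ (a subspace of $\mathbb{R}^d$); $A'$ is the transpose. *)

theory Defs
  imports "HOL-Probability.Probability"
begin

definition row_space :: "real^'d^'n \<Rightarrow> (real^'d) set" where
  "row_space A = span (rows A)"

definition orth_proj :: "('a::real_inner) set \<Rightarrow> 'a \<Rightarrow> 'a" where
  "orth_proj W x = (THE p. p \<in> W \<and> (\<forall>y\<in>W. inner (x - p) y = 0))"

definition outer :: "real^'m \<Rightarrow> real^'k \<Rightarrow> real^'k^'m" where
  "outer u v = (\<chi> i j. u $ i * v $ j)"

primrec iter :: "real^'d^'n \<Rightarrow> real^'n \<Rightarrow> real^'d \<Rightarrow> (nat \<Rightarrow> real^'n)
                  \<Rightarrow> nat \<Rightarrow> (real^'d) \<times> (real^'d^'d)" where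
  "iter A b x0 ws 0 = (x0, mat 1)"
| "iter A b x0 ws (Suc l) =
     (let x = fst (iter A b x0 ws l); S = snd (iter A b x0 ws l); w = ws l;
          den = w \<bullet> ((A ** S ** transpose A) *v w)
      in if (S ** transpose A) *v w \<noteq> 0
         then (x + (1 / den) *\<^sub>R ((S ** transpose A ** outer w w) *v (b - A *v x)),
               S - (1 / den) *\<^sub>R (S ** transpose A ** outer w w ** A ** S))
         else (x, S))"

definition Nsp :: "'a measure \<Rightarrow> real^'d^'n \<Rightarrow> ('a \<Rightarrow> real^'n) \<Rightarrow> (real^'d) set" where
  "Nsp M A w = span {z. measure M {\<omega> \<in> space M. z \<bullet> (transpose A *v w \<omega>) = 0} = 1}"

definition Rsp :: "'a measure \<Rightarrow> real^'d^'n \<Rightarrow> ('a \<Rightarrow> real^'n) \<Rightarrow> (real^'d) set" where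
  "Rsp M A w = orthogonal_comp (Nsp M A w)"

text \<open>V(w): the subspace orthogonal to R(w) with V(w) + R(w) = row(A) (direct sum);
  since R(w) is contained in row(A), this is row(A) intersected with R(w)^perp.\<close>
definition Vsp :: "'a measure \<Rightarrow> real^'d^'n \<Rightarrow> ('a \<Rightarrow> real^'n) \<Rightarrow> (real^'d) set" where
  "Vsp M A w = row_space A \<inter> orthogonal_comp (Rsp M A w)"

end

(*
  Let G_l = {A'w_i | i < l}. By induction on l, S_l is the orthogonal projector onto
  (span G_l)^perp, x_l - x_0 lies in span G_l and x_l - x* is orthogonal to G_l: a step with
  S_l A'w_l = 0 adds a direction already in span G_l and changes nothing, any other step is a
  rank-one update of the projector together with the matching correction of x_l.
  Almost surely every A'w_l lies in R(w), so span G_(T+1) = R(w). Now A x = b iff x - x* is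
  orthogonal to row(A) = R(w) + V(w). Orthogonality to R(w) holds by the invariant, and since
  x - x_0 lies in R(w), which is orthogonal to V(w), x - x* is orthogonal to V(w) iff x_0 - x* is,
  i.e. iff P_V x_0 = P_V x*.
*)
theory Submission
  imports Defs
begin

declare transpose_matrix_vector [simp del]

lemma in_orthogonal_comp_iff: "x \<in> orthogonal_comp U \<longleftrightarrow> (\<forall>u\<in>U. x \<bullet> u = 0)"
  by (auto simp: orthogonal_comp_def orthogonal_def inner_commute)

lemma orthogonal_comp_span:
  fixes S :: "'a::real_inner set"
  shows "orthogonal_comp (span S) = orthogonal_comp S"
  using orthogonal_comp_anti_mono[OF span_superset[of S]] orthogonal_to_span
  by (fastforce simp: orthogonal_comp_def orthogonal_commute)

lemma in_orthogonal_comp_Int_orthogonal_comp_iff: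
  fixes R W :: "'a::euclidean_space set"
  assumes R: "subspace R" and W: "subspace W" "R \<subseteq> W" and e: "e \<in> orthogonal_comp R"
  shows "e \<in> orthogonal_comp (W \<inter> orthogonal_comp R) \<longleftrightarrow> e \<in> orthogonal_comp W"
proof
  assume eV: "e \<in> orthogonal_comp (W \<inter> orthogonal_comp R)"
  show "e \<in> orthogonal_comp W" unfolding in_orthogonal_comp_iff
  proof
    fix r assume r: "r \<in> W"
    obtain p q where pq: "p \<in> R" "q \<in> orthogonal_comp R" "r = p + q"
      using subspace_sum_orthogonal_comp[OF R] by (metis UNIV_I set_plus_elim)
    have "q = r - p" using pq(3) by simp
    then have "q \<in> W" using subspace_diff[OF W(1) r] pq(1) W(2) by blast
    then have "e \<bullet> q = 0" using eV pq(2) by (simp add: in_orthogonal_comp_iff)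
    moreover have "e \<bullet> p = 0" using e pq(1) by (simp add: in_orthogonal_comp_iff)
    ultimately show "e \<bullet> r = 0" using pq(3) by (simp add: inner_add_right)
  qed
next
  assume "e \<in> orthogonal_comp W"
  then show "e \<in> orthogonal_comp (W \<inter> orthogonal_comp R)"
    using orthogonal_comp_anti_mono[of "W \<inter> orthogonal_comp R" W] by blast
qed

lemma orth_proj_unique:
  fixes W :: "'a::euclidean_space set"
  assumes W: "subspace W" and p: "p \<in> W" "z - p \<in> orthogonal_comp W"
  shows "orth_proj W z = p"
  unfolding orth_proj_def
proof (rule the_equality)
  show "p \<in> W \<and> (\<forall>y\<in>W. inner (z - p) y = 0)"
    using p by (auto simp: orthogonal_comp_def orthogonal_def inner_commute)
next
  fix p' assume p': "p' \<in> W \<and> (\<forall>y\<in>W. inner (z - p') y = 0)"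
  have "p' - p \<in> W" using p p' W by (simp add: subspace_diff)
  moreover have "(z - p) - (z - p') \<in> orthogonal_comp W"
    by (rule subspace_diff[OF subspace_orthogonal_comp])
      (use p p' in \<open>auto simp: orthogonal_comp_def orthogonal_def inner_commute\<close>)
  then have "p' - p \<in> orthogonal_comp W" by simp
  ultimately have "p' - p \<in> W \<inter> orthogonal_comp W" by blast
  then show "p' = p" unfolding orthogonal_Int_0[OF W] by simp
qed

lemma orth_proj_decomp:
  fixes W :: "'a::euclidean_space set"
  assumes W: "subspace W"
  shows "orth_proj W z \<in> W" and "z - orth_proj W z \<in> orthogonal_comp W"
proof -
  obtain p q where pq: "p \<in> W" "q \<in> orthogonal_comp W" "z = p + q"
    using subspace_sum_orthogonal_comp[OF W] by (metis UNIV_I set_plus_elim)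
  then have "orth_proj W z = p" by (intro orth_proj_unique[OF W]) auto
  with pq show "orth_proj W z \<in> W" and "z - orth_proj W z \<in> orthogonal_comp W" by simp_all
qed

lemma orth_proj_eq_iff:
  fixes W :: "'a::euclidean_space set"
  assumes W: "subspace W"
  shows "orth_proj W x = orth_proj W y \<longleftrightarrow> x - y \<in> orthogonal_comp W"
proof
  assume "orth_proj W x = orth_proj W y"
  then have "x - y = (x - orth_proj W x) - (y - orth_proj W y)" by simp
  also have "\<dots> \<in> orthogonal_comp W"
    by (rule subspace_diff[OF subspace_orthogonal_comp orth_proj_decomp(2)[OF W]
        orth_proj_decomp(2)[OF W]])
  finally show "x - y \<in> orthogonal_comp W" .
next
  assume "x - y \<in> orthogonal_comp W"
  then have "(x - orth_proj W x) - (x - y) \<in> orthogonal_comp W"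
    by (rule subspace_diff[OF subspace_orthogonal_comp orth_proj_decomp(2)[OF W]])
  then have "y - orth_proj W x \<in> orthogonal_comp W" by simp
  then show "orth_proj W x = orth_proj W y"
    using orth_proj_unique[OF W orth_proj_decomp(1)[OF W]] by metis
qed

lemma outer_mult_vec: "outer u v *v y = (v \<bullet> y) *\<^sub>R u"
  by (simp add: outer_def matrix_vector_mult_def vec_eq_iff inner_vec_def sum_distrib_left
      mult.commute mult.left_commute)

lemma inner_transpose_mult_vec: "(transpose A *v w) \<bullet> x = w \<bullet> (A *v (x::real^'d))"
  by (simp add: dot_lmul_matrix transpose_matrix_vector)

lemma matrix_vector_mult_eq_0_iff:
  fixes A :: "real^'d^'n"
  shows "A *v e = 0 \<longleftrightarrow> e \<in> orthogonal_comp (row_space A)"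
proof -
  have "A *v e = 0 \<longleftrightarrow> (\<forall>r\<in>rows A. r \<bullet> e = 0)"
    by (auto simp: rows_def vec_eq_iff matrix_vector_mult_def row_def inner_vec_def mult.commute)
  then show ?thesis
    by (simp add: row_space_def orthogonal_comp_span) (simp add: orthogonal_comp_def orthogonal_def)
qed

lemma matrix_vector_mult_eq_0_on_span:
  fixes S :: "real^'m^'n"
  assumes "\<And>u. u \<in> B \<Longrightarrow> S *v u = 0" and "u \<in> span B"
  shows "S *v u = 0"
  using linear_eq_0_on_span[OF matrix_vector_mul_linear[of S]] assms by blast

definition orth_comp_projector :: "(real^'d) set \<Rightarrow> real^'d^'d \<Rightarrow> bool" where
  "orth_comp_projector G S \<longleftrightarrow>
     (\<forall>u v. (S *v u) \<bullet> v = u \<bullet> (S *v v)) \<and> (\<forall>u\<in>span G. S *v u = 0) \<and> (\<forall>v. v - S *v v \<in> span G)"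

lemma orth_comp_projector_mult_vec:
  assumes S: "orth_comp_projector G S" and c: "c = S *v a"
  shows "c \<in> orthogonal_comp G" and "c \<in> span (insert a G)" and "a \<bullet> c = c \<bullet> c"
proof -
  have sym: "\<And>u v. (S *v u) \<bullet> v = u \<bullet> (S *v v)" and SG: "\<And>u. u \<in> span G \<Longrightarrow> S *v u = 0"
    and dG: "\<And>v. v - S *v v \<in> span G"
    using S by (auto simp: orth_comp_projector_def)
  show "c \<in> orthogonal_comp G"
    using sym SG c by (simp add: in_orthogonal_comp_iff span_base)
  have "a \<in> span (insert a G)" by (rule span_base) simp
  moreover have "a - c \<in> span (insert a G)"
    using subsetD[OF span_mono[OF subset_insertI] dG[of a]] c by simp
  ultimately have "a - (a - c) \<in> span (insert a G)" by (rule span_diff)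
  then show "c \<in> span (insert a G)" by simp
  have "S *v (a - c) = 0" using SG dG c by simp
  then have "S *v c = c" by (simp add: matrix_vector_mult_diff_distrib c)
  then show "a \<bullet> c = c \<bullet> c" using sym[of a c] c by simp
qed

lemma orth_comp_projector_insert_kernel:
  assumes S: "orth_comp_projector G S" and Sa: "S *v a = 0"
  shows "orth_comp_projector (insert a G) S"
proof -
  have sym: "\<And>u v. (S *v u) \<bullet> v = u \<bullet> (S *v v)" and SG: "\<And>u. u \<in> G \<Longrightarrow> S *v u = 0"
    and dG: "\<And>v. v - S *v v \<in> span G"
    using S by (auto simp: orth_comp_projector_def span_base)
  have "S *v u = 0" if "u \<in> span (insert a G)" for u
    by (rule matrix_vector_mult_eq_0_on_span[OF _ that]) (use Sa SG in auto)
  moreover have "v - S *v v \<in> span (insert a G)" for v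
    using subsetD[OF span_mono[OF subset_insertI] dG[of v]] .
  ultimately show ?thesis using sym unfolding orth_comp_projector_def by blast
qed

lemma orth_comp_projector_rank_one_update:
  assumes S: "orth_comp_projector G S" and c: "c = S *v a" "c \<noteq> 0"
    and S': "\<And>v. S' *v v = S *v v - ((c \<bullet> v) / (a \<bullet> c)) *\<^sub>R c"
  shows "orth_comp_projector (insert a G) S'"
proof -
  have sym: "\<And>u v. (S *v u) \<bullet> v = u \<bullet> (S *v v)" and SG: "\<And>u. u \<in> G \<Longrightarrow> S *v u = 0"
    and dG: "\<And>v. v - S *v v \<in> span G"
    using S by (auto simp: orth_comp_projector_def span_base)
  have cG: "c \<in> orthogonal_comp G" and cG': "c \<in> span (insert a G)" and "a \<bullet> c = c \<bullet> c"
    using orth_comp_projector_mult_vec[OF S c(1)] by auto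
  then have den: "a \<bullet> c \<noteq> 0" using c(2) by simp
  have "(S' *v u) \<bullet> v = u \<bullet> (S' *v v)" for u v
    using sym[of u v] by (simp add: S' inner_diff_left inner_diff_right inner_commute[of u c])
  moreover have "S' *v u = 0" if "u \<in> span (insert a G)" for u
  proof (rule matrix_vector_mult_eq_0_on_span[OF _ that])
    fix y assume "y \<in> insert a G"
    then show "S' *v y = 0"
      using den SG cG by (auto simp: S' inner_commute[of c a] in_orthogonal_comp_iff c(1)[symmetric])
  qed
  moreover have "v - S' *v v \<in> span (insert a G)" for v
  proof -
    have "v - S' *v v = (v - S *v v) + ((c \<bullet> v) / (a \<bullet> c)) *\<^sub>R c" by (simp add: S')
    also have "\<dots> \<in> span (insert a G)"
      using dG[of v] span_mono[of G "insert a G"] cG' by (intro span_add span_mul) auto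
    finally show ?thesis .
  qed
  ultimately show ?thesis unfolding orth_comp_projector_def by blast
qed

definition iter_invariant ::
    "(real^'d) set \<Rightarrow> real^'d^'d \<Rightarrow> real^'d \<Rightarrow> real^'d \<Rightarrow> real^'d \<Rightarrow> bool" where
  "iter_invariant G S x x0 xstar \<longleftrightarrow>
     orth_comp_projector G S \<and> x - x0 \<in> span G \<and> x - xstar \<in> orthogonal_comp G"

lemma iter_invariant_skip:
  assumes inv: "iter_invariant G S x x0 xstar" and Sa: "S *v a = 0"
  shows "iter_invariant (insert a G) S x x0 xstar"
proof -
  have S: "orth_comp_projector G S" and xG: "x - x0 \<in> span G"
    and xo: "x - xstar \<in> orthogonal_comp (span G)"
    using inv by (simp_all add: iter_invariant_def orthogonal_comp_span)
  have "(x - xstar) \<bullet> a = (x - xstar) \<bullet> (a - S *v a)" by (simp add: Sa)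
  also have "\<dots> = 0" using S xo by (simp add: orth_comp_projector_def in_orthogonal_comp_iff)
  finally have "x - xstar \<in> orthogonal_comp (insert a G)"
    using xo by (simp add: in_orthogonal_comp_iff span_base)
  moreover have "x - x0 \<in> span (insert a G)" using subsetD[OF span_mono[OF subset_insertI] xG] .
  ultimately show ?thesis
    using orth_comp_projector_insert_kernel[OF S Sa] by (simp add: iter_invariant_def)
qed

lemma iter_invariant_update:
  assumes inv: "iter_invariant G S x x0 xstar" and c: "c = S *v a" "c \<noteq> 0"
    and S': "\<And>v. S' *v v = S *v v - ((c \<bullet> v) / (a \<bullet> c)) *\<^sub>R c"
  shows "iter_invariant (insert a G) S' (x + ((a \<bullet> (xstar - x)) / (a \<bullet> c)) *\<^sub>R c) x0 xstar"
proof -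
  define t where "t = (a \<bullet> (xstar - x)) / (a \<bullet> c)"
  have S: "orth_comp_projector G S" and xG: "x - x0 \<in> span G" and xo: "x - xstar \<in> orthogonal_comp G"
    using inv by (simp_all add: iter_invariant_def)
  have cG: "c \<in> orthogonal_comp G" and cG': "c \<in> span (insert a G)" and "a \<bullet> c = c \<bullet> c"
    using orth_comp_projector_mult_vec[OF S c(1)] by auto
  then have den: "a \<bullet> c \<noteq> 0" using c(2) by simp
  have "(x + t *\<^sub>R c) - x0 = (x - x0) + t *\<^sub>R c" by simp
  also have "\<dots> \<in> span (insert a G)"
    using xG span_mono[of G "insert a G"] cG' by (intro span_add span_mul) auto
  finally have x'G: "(x + t *\<^sub>R c) - x0 \<in> span (insert a G)" .
  have "t * (c \<bullet> a) = a \<bullet> (xstar - x)" using den by (simp add: t_def inner_commute[of c a])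
  then have "((x - xstar) + t *\<^sub>R c) \<bullet> a = 0"
    by (simp add: inner_add_left inner_diff_left inner_diff_right inner_commute[of a])
  moreover have "((x - xstar) + t *\<^sub>R c) \<bullet> u = 0" if "u \<in> G" for u
    using xo cG that by (simp add: inner_add_left in_orthogonal_comp_iff)
  ultimately have "(x - xstar) + t *\<^sub>R c \<in> orthogonal_comp (insert a G)"
    by (simp add: in_orthogonal_comp_iff)
  moreover have "(x - xstar) + t *\<^sub>R c = (x + t *\<^sub>R c) - xstar" by simp
  ultimately have x'o: "(x + t *\<^sub>R c) - xstar \<in> orthogonal_comp (insert a G)" by (simp only:)
  with x'G show ?thesis
    using orth_comp_projector_rank_one_update[OF S c S'] unfolding iter_invariant_def t_def by blast
qed

lemma iter_Suc_skip:
  assumes "snd (iter A b x0 ws l) *v (transpose A *v ws l) = 0"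
  shows "iter A b x0 ws (Suc l) = iter A b x0 ws l"
  using assms by (simp add: Let_def matrix_vector_mul_assoc)

lemma iter_Suc_update:
  fixes A :: "real^'d^'n" and b :: "real^'n" and x0 :: "real^'d" and ws :: "nat \<Rightarrow> real^'n"
    and l :: nat
  defines "x \<equiv> fst (iter A b x0 ws l)" and "S \<equiv> snd (iter A b x0 ws l)"
    and "a \<equiv> transpose A *v ws l"
  assumes sym: "\<And>u v. (S *v u) \<bullet> v = u \<bullet> (S *v v)" and sol: "A *v xstar = b"
    and nz: "S *v a \<noteq> 0"
  shows "fst (iter A b x0 ws (Suc l)) = x + ((a \<bullet> (xstar - x)) / (a \<bullet> (S *v a))) *\<^sub>R (S *v a)"
    and "snd (iter A b x0 ws (Suc l)) *v v
           = S *v v - (((S *v a) \<bullet> v) / (a \<bullet> (S *v a))) *\<^sub>R (S *v a)"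
proof -
  let ?w = "ws l"
  have cond: "(S ** transpose A) *v ?w = S *v a"
    by (simp add: a_def matrix_vector_mul_assoc)
  have den: "?w \<bullet> ((A ** S ** transpose A) *v ?w) = a \<bullet> (S *v a)"
    by (simp add: a_def matrix_vector_mul_assoc[symmetric] inner_transpose_mult_vec)
  have step_x: "(S ** transpose A ** outer ?w ?w) *v (b - A *v x) = (a \<bullet> (xstar - x)) *\<^sub>R (S *v a)"
    by (simp add: a_def sol[symmetric] matrix_vector_mul_assoc[symmetric] outer_mult_vec
        matrix_vector_mult_scaleR matrix_vector_mult_diff_distrib[symmetric] inner_transpose_mult_vec)
  have step_S: "(S ** transpose A ** outer ?w ?w ** A ** S) *v v = ((S *v a) \<bullet> v) *\<^sub>R (S *v a)"
    by (simp add: a_def matrix_vector_mul_assoc[symmetric] outer_mult_vec matrix_vector_mult_scaleR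
        inner_transpose_mult_vec sym)
  show "fst (iter A b x0 ws (Suc l)) = x + ((a \<bullet> (xstar - x)) / (a \<bullet> (S *v a))) *\<^sub>R (S *v a)"
    using nz cond den step_x by (simp add: Let_def x_def S_def)
  show "snd (iter A b x0 ws (Suc l)) *v v
           = S *v v - (((S *v a) \<bullet> v) / (a \<bullet> (S *v a))) *\<^sub>R (S *v a)"
    using nz cond den step_S
    by (simp add: Let_def x_def S_def matrix_vector_mult_diff_rdistrib
        scaleR_matrix_vector_assoc[symmetric])
qed

lemma iter_invariant_iter:
  fixes A :: "real^'d^'n"
  assumes sol: "A *v xstar = b"
  shows "iter_invariant {transpose A *v ws i | i. i < l}
           (snd (iter A b x0 ws l)) (fst (iter A b x0 ws l)) x0 xstar"
proof (induction l)
  case 0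
  show ?case by (simp add: iter_invariant_def orth_comp_projector_def in_orthogonal_comp_iff)
next
  case (Suc l)
  let ?S = "snd (iter A b x0 ws l)" and ?a = "transpose A *v ws l"
  have G_Suc: "{transpose A *v ws i | i. i < Suc l} = insert ?a {transpose A *v ws i | i. i < l}"
    by (auto simp: less_Suc_eq)
  show ?case
  proof (cases "?S *v ?a = 0")
    case True
    show ?thesis
      using iter_invariant_skip[OF Suc.IH True] unfolding G_Suc iter_Suc_skip[OF True] .
  next
    case False
    have sym: "\<And>u v. (?S *v u) \<bullet> v = u \<bullet> (?S *v v)"
      using Suc.IH by (simp add: iter_invariant_def orth_comp_projector_def)
    show ?thesis
      using iter_invariant_update[OF Suc.IH refl False iter_Suc_update(2)[OF sym sol False]]
      unfolding G_Suc iter_Suc_update(1)[OF sym sol False] .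
  qed
qed

lemma solves_iff_orth_proj_eq:
  fixes A :: "real^'d^'n"
  assumes sol: "A *v xstar = b" and R: "subspace R" "R \<subseteq> row_space A"
    and xR: "x - x0 \<in> R" and xo: "x - xstar \<in> orthogonal_comp R"
  shows "A *v x = b \<longleftrightarrow>
    orth_proj (row_space A \<inter> orthogonal_comp R) x0 = orth_proj (row_space A \<inter> orthogonal_comp R) xstar"
proof -
  define V where "V = row_space A \<inter> orthogonal_comp R"
  have row: "subspace (row_space A)" by (simp add: row_space_def)
  then have V: "subspace V" by (simp add: V_def subspace_inter subspace_orthogonal_comp)
  have "x - x0 \<in> orthogonal_comp V"
    using xR by (simp add: V_def in_orthogonal_comp_iff inner_commute)
  then have shift: "x0 - xstar \<in> orthogonal_comp V \<longleftrightarrow> x - xstar \<in> orthogonal_comp V"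
    using subspace_add[OF subspace_orthogonal_comp, of "x0 - xstar" V "x - x0"]
      subspace_diff[OF subspace_orthogonal_comp, of "x - xstar" V "x - x0"]
    by auto
  have "A *v x = b \<longleftrightarrow> A *v (x - xstar) = 0"
    by (simp add: sol[symmetric] matrix_vector_mult_diff_distrib)
  also have "\<dots> \<longleftrightarrow> x - xstar \<in> orthogonal_comp (row_space A)"
    by (rule matrix_vector_mult_eq_0_iff)
  also have "\<dots> \<longleftrightarrow> x - xstar \<in> orthogonal_comp V"
    unfolding V_def by (rule in_orthogonal_comp_Int_orthogonal_comp_iff[OF R(1) row R(2) xo, symmetric])
  also have "\<dots> \<longleftrightarrow> orth_proj V x0 = orth_proj V xstar"
    by (simp add: shift orth_proj_eq_iff[OF V])
  finally show ?thesis unfolding V_def .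
qed

lemma iter_solves_iff_orth_proj_eq:
  fixes A :: "real^'d^'n" and ws :: "nat \<Rightarrow> real^'n"
  assumes sol: "A *v xstar = b" and R: "subspace R" "R \<subseteq> row_space A"
    and dirs: "\<And>l. transpose A *v ws l \<in> R"
    and cover: "R \<subseteq> span {transpose A *v ws i | i. i \<le> T}"
  shows "A *v fst (iter A b x0 ws (Suc T)) = b \<longleftrightarrow>
    orth_proj (row_space A \<inter> orthogonal_comp R) x0 = orth_proj (row_space A \<inter> orthogonal_comp R) xstar"
proof -
  let ?G = "{transpose A *v ws i | i. i < Suc T}"
  define x where "x = fst (iter A b x0 ws (Suc T))"
  have "?G = {transpose A *v ws i | i. i \<le> T}" by (auto simp: less_Suc_eq_le)
  then have G: "span ?G = R"
    using cover span_minimal[of ?G R] dirs R(1) by auto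
  have "iter_invariant ?G (snd (iter A b x0 ws (Suc T))) x x0 xstar"
    unfolding x_def by (rule iter_invariant_iter[OF sol])
  then have "x - x0 \<in> R" and "x - xstar \<in> orthogonal_comp R"
    by (simp_all add: iter_invariant_def G flip: orthogonal_comp_span[of ?G])
  from solves_iff_orth_proj_eq[OF sol R this] show ?thesis unfolding x_def .
qed

lemma Rsp_subset_row_space:
  assumes "prob_space M"
  shows "Rsp M A w \<subseteq> row_space A"
proof -
  have "orthogonal_comp (row_space A) \<subseteq> Nsp M A w"
  proof
    fix q assume "q \<in> orthogonal_comp (row_space A)"
    then have "A *v q = 0" by (simp add: matrix_vector_mult_eq_0_iff)
    then have "{\<omega> \<in> space M. q \<bullet> (transpose A *v w \<omega>) = 0} = space M"
      by (simp add: inner_commute[of q] inner_transpose_mult_vec)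
    then have "measure M {\<omega> \<in> space M. q \<bullet> (transpose A *v w \<omega>) = 0} = 1"
      using prob_space.prob_space[OF assms] by simp
    then show "q \<in> Nsp M A w" unfolding Nsp_def by (intro span_base) simp
  qed
  then have "orthogonal_comp (Nsp M A w) \<subseteq> orthogonal_comp (orthogonal_comp (row_space A))"
    by (rule orthogonal_comp_anti_mono)
  moreover have "subspace (row_space A)" by (simp add: row_space_def)
  ultimately show ?thesis by (simp add: Rsp_def orthogonal_comp_self)
qed

theorem mainTheorem6:
  fixes M :: "'a measure"
    and A :: "real^'d^'n" and b :: "real^'n" and xstar x0 :: "real^'d"
    and w :: "'a \<Rightarrow> real^'n" and ws :: "nat \<Rightarrow> 'a \<Rightarrow> real^'n"
  assumes "prob_space M"
    and "A *v xstar = b"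
    and "w \<in> borel_measurable M"
    and "\<And>l. ws l \<in> borel_measurable M"
    and "\<And>l. measure M {\<omega> \<in> space M. transpose A *v ws l \<omega> \<in> Rsp M A w} = 1"
  shows "AE \<omega> in M.
           (\<exists>k. Rsp M A w \<subseteq> span {transpose A *v ws i \<omega> | i. i \<le> k}) \<longrightarrow>
           (let T = (LEAST k. Rsp M A w \<subseteq> span {transpose A *v ws i \<omega> | i. i \<le> k})
            in A *v fst (iter A b x0 (\<lambda>l. ws l \<omega>) (Suc T)) = b
               \<longleftrightarrow> orth_proj (Vsp M A w) x0 = orth_proj (Vsp M A w) xstar)"
proof -
  have R: "subspace (Rsp M A w)" "Rsp M A w \<subseteq> row_space A"
    using Rsp_subset_row_space[OF assms(1)] by (simp_all add: Rsp_def subspace_orthogonal_comp)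
  have "\<And>l. AE \<omega> in M. transpose A *v ws l \<omega> \<in> Rsp M A w"
    using prob_space.AE_prob_1[OF assms(1) assms(5)] by (auto elim: eventually_mono)
  then have "AE \<omega> in M. \<forall>l. transpose A *v ws l \<omega> \<in> Rsp M A w"
    by (simp add: AE_all_countable)
  then show ?thesis
  proof (rule eventually_mono, intro impI)
    fix \<omega> assume dirs: "\<forall>l. transpose A *v ws l \<omega> \<in> Rsp M A w"
      and covered: "\<exists>k. Rsp M A w \<subseteq> span {transpose A *v ws i \<omega> | i. i \<le> k}"
    from covered have "Rsp M A w \<subseteq> span {transpose A *v ws i \<omega> | i. i \<le> (LEAST k. Rsp M A w \<subseteq>
        span {transpose A *v ws i \<omega> | i. i \<le> k})}"
      by (rule LeastI_ex)
    with dirs show "let T = (LEAST k. Rsp M A w \<subseteq> span {transpose A *v ws i \<omega> | i. i \<le> k})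
        in A *v fst (iter A b x0 (\<lambda>l. ws l \<omega>) (Suc T)) = b
           \<longleftrightarrow> orth_proj (Vsp M A w) x0 = orth_proj (Vsp M A w) xstar"
      unfolding Let_def Vsp_def by (intro iter_solves_iff_orth_proj_eq[OF assms(2) R]) auto
  qed
qed

end
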